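(* For every positive integer $p$, there is a deterministic $p$-pass streaming algorithm for \textsc{Find-Duplicate} that uses $\widetilde{O}(n^{1/p})$ memory (where $\widetilde{O}$ hides factors polylogarithmic in $n$).
   Context: \textsc{Find-Duplicate}: the input is a stream of $3n/2$ integers, each in $\{1,\dots,n\}$; the goal is to output an integer that appears at least twice in the stream. A $p$-pass streaming algorithm is allowed to read the entire input stream, in order, $p$ times, maintaining only its memory state between and during passes. *)

theory Defs
  imports Complex_Main
begin

text \<open>The memory state is a natural number below 2^s.  The algorithm is given by an
  initial state, a transition function delta i t x (pass number i, current state t,
  current stream symbol x), and an output function applied to the final state.
  The state is carried over unchanged between passes (any between-pass
  processing can be folded into the transition functions of the next pass).\<close>

definition pass_run :: "(nat \<Rightarrow> nat \<Rightarrow> nat) \<Rightarrow> nat list \<Rightarrow> nat \<Rightarrow> nat" where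
  "pass_run step xs t = fold (\<lambda>x u. step u x) xs t"

fun run_passes :: "(nat \<Rightarrow> nat \<Rightarrow> nat \<Rightarrow> nat) \<Rightarrow> nat \<Rightarrow> nat list \<Rightarrow> nat \<Rightarrow> nat" where
  "run_passes \<delta> 0 xs t = t"
| "run_passes \<delta> (Suc i) xs t = pass_run (\<delta> i) xs (run_passes \<delta> i xs t)"

definition streaming_alg :: "nat \<Rightarrow> nat \<Rightarrow> nat \<Rightarrow> (nat \<Rightarrow> nat \<Rightarrow> nat \<Rightarrow> nat) \<Rightarrow> bool" where
  "streaming_alg p s init \<delta> \<longleftrightarrow>
     init < 2 ^ s \<and> (\<forall>i<p. \<forall>t<2 ^ s. \<forall>x. \<delta> i t x < 2 ^ s)"

definition solves_find_duplicate ::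
  "nat \<Rightarrow> nat \<Rightarrow> nat \<Rightarrow> (nat \<Rightarrow> nat \<Rightarrow> nat \<Rightarrow> nat) \<Rightarrow> (nat \<Rightarrow> nat) \<Rightarrow> bool" where
  "solves_find_duplicate n p init \<delta> out \<longleftrightarrow>
     (\<forall>xs. length xs = 3 * n div 2 \<longrightarrow> set xs \<subseteq> {1..n} \<longrightarrow>
        count_list xs (out (run_passes \<delta> p xs init)) \<ge> 2)"

end

theory Submission
  imports Defs
begin

(* B-ary search for an overfull window, with B = ceiling (n powr (1/p)): a window of values is
   overfull if more stream elements than elements of {1..n} lie in it, and {1..B^p} is overfull
   because 3n/2 > n. In each pass the current window is cut into B equal pieces and the stream
   elements in every piece are counted; as both counts are additive over the pieces, some piece
   is again overfull, and the first one becomes the next window. After p passes the window is a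
   single value, which therefore occurs at least twice. Since the state is not processed between
   passes, the algorithm keeps the p * B counters of all passes (O(log n) bits each, stored as the
   base 2^b digits of the state) and recomputes the current window from them. *)

definition digits_encode :: "nat \<Rightarrow> nat \<Rightarrow> (nat \<Rightarrow> nat) \<Rightarrow> nat" where
  "digits_encode M K g = (\<Sum>k<K. (g k mod M) * M ^ k)"

definition digit :: "nat \<Rightarrow> nat \<Rightarrow> nat \<Rightarrow> nat" where
  "digit M t k = t div M ^ k mod M"

lemma digits_encode_less:
  assumes "0 < M" shows "digits_encode M K g < M ^ K"
proof (induction K)
  case 0 then show ?case by (simp add: digits_encode_def)
next
  case (Suc K)
  have "(g K mod M + 1) * M ^ K \<le> M * M ^ K"
    using assms by (intro mult_right_mono) (simp_all add: Suc_leI)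
  then show ?case using Suc by (simp add: digits_encode_def algebra_simps)
qed

lemma digits_encode_Suc:
  "digits_encode M (Suc K) g = g 0 mod M + M * digits_encode M K (\<lambda>k. g (Suc k))"
  unfolding digits_encode_def sum.lessThan_Suc_shift by (simp add: sum_distrib_left algebra_simps)

lemma digit_digits_encode:
  assumes "1 < M"
  shows "digit M (digits_encode M K g) k = (if k < K then g k mod M else 0)"
proof (induction k arbitrary: g K)
  case 0
  then show ?case
    using assms by (cases K) (simp_all add: digit_def digits_encode_Suc digits_encode_def[of M 0])
next
  case (Suc k)
  show ?case
  proof (cases K)
    case 0 then show ?thesis by (simp add: digit_def digits_encode_def)
  next
    case (Suc K')
    have "digits_encode M K g div M = digits_encode M K' (\<lambda>k. g (Suc k))"
      using assms by (simp add: Suc digits_encode_Suc)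
    then have "digit M (digits_encode M K g) (Suc k) = digit M (digits_encode M K' (\<lambda>k. g (Suc k))) k"
      by (simp add: digit_def div_mult2_eq mult.commute)
    then show ?thesis using Suc.IH[of K' "\<lambda>k. g (Suc k)"] by (simp add: Suc)
  qed
qed

definition window_count :: "nat list \<Rightarrow> nat \<Rightarrow> nat \<Rightarrow> nat" where
  "window_count xs a w = length (filter (\<lambda>x. x \<in> {a<..a + w}) xs)"

lemma window_count_add:
  "window_count xs a (v + w) = window_count xs a v + window_count xs (a + v) w"
  by (induction xs) (auto simp: window_count_def)

lemma window_count_mult:
  "window_count xs a (m * w) = (\<Sum>d<m. window_count xs (a + d * w) w)"
proof (induction m)
  case 0 then show ?case by (simp add: window_count_def)
next
  case (Suc m)
  have "window_count xs a (Suc m * w) = window_count xs a (m * w) + window_count xs (a + m * w) w"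
    by (simp flip: window_count_add add: add.commute)
  then show ?case using Suc by simp
qed

lemma window_pigeonhole:
  assumes "window_count ys a (m * w) < window_count xs a (m * w)"
  obtains d where "d < m" "window_count ys (a + d * w) w < window_count xs (a + d * w) w"
  using assms unfolding window_count_mult by (meson lessThan_iff not_less sum_mono)

lemma window_count_one: "window_count xs a 1 = count_list xs (Suc a)"
  unfolding window_count_def count_list_eq_length_filter
  by (rule arg_cong[where f = length], rule filter_cong) auto

lemma window_count_le_length: "window_count xs a w \<le> length xs"
  unfolding window_count_def by (rule length_filter_le)

lemma count_list_upt: "count_list [m..<k] x = (if m \<le> x \<and> x < k then 1 else 0)"
  by (induction k) auto

lemma min_min_add: "min (min a c + w) c = min (a + w) (c :: nat)"
  by (simp add: min_def)

primrec iterate_passes :: "(nat \<Rightarrow> 'x \<Rightarrow> 'a \<Rightarrow> 'a) \<Rightarrow> nat \<Rightarrow> 'x list \<Rightarrow> 'a \<Rightarrow> 'a" where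
  "iterate_passes step 0 xs g = g"
| "iterate_passes step (Suc i) xs g = fold (step i) xs (iterate_passes step i xs g)"

lemma fold_closed:
  assumes "\<And>x g. g \<in> S \<Longrightarrow> step x g \<in> S" "g \<in> S"
  shows "fold step xs g \<in> S"
  using assms(2) by (induction xs arbitrary: g) (simp_all add: assms(1))

lemma iterate_passes_closed:
  assumes "\<And>i x g. i < p \<Longrightarrow> g \<in> S \<Longrightarrow> step i x g \<in> S" "g \<in> S" "i \<le> p"
  shows "iterate_passes step i xs g \<in> S"
  using assms(3) by (induction i) (simp_all add: assms(2) fold_closed assms(1))

lemma pass_run_simulation:
  assumes "\<And>g. g \<in> S \<Longrightarrow> decode (encode g) = g"
    and "\<And>x g. g \<in> S \<Longrightarrow> step x g \<in> S" "g \<in> S"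
  shows "pass_run (\<lambda>t x. encode (step x (decode t))) xs (encode g) = encode (fold step xs g)"
  using assms(3) by (induction xs arbitrary: g) (simp_all add: pass_run_def assms(1,2))

lemma run_passes_simulation:
  assumes "\<And>g. g \<in> S \<Longrightarrow> decode (encode g) = g"
    and "\<And>i x g. i < p \<Longrightarrow> g \<in> S \<Longrightarrow> step i x g \<in> S" "g \<in> S" "i \<le> p"
  shows "run_passes (\<lambda>i t x. encode (step i x (decode t))) i xs (encode g)
           = encode (iterate_passes step i xs g)"
  using assms(4)
proof (induction i)
  case (Suc i)
  then have "i < p" by simp
  then have "iterate_passes step i xs g \<in> S"
    using iterate_passes_closed[OF assms(2,3), where i = i and xs = xs] by simp
  then show ?case
    using Suc \<open>i < p\<close> by (simp add: pass_run_simulation[where S = S] assms(1,2))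
qed simp

locale find_duplicate_search =
  fixes n p B b :: nat
  assumes two_le_n: "2 \<le> n" and n_le_power: "n \<le> B ^ p"
    and counters_fit: "2 * n \<le> 2 ^ b"
begin

abbreviation M :: nat where "M \<equiv> 2 ^ b"

definition capacity :: "nat \<Rightarrow> nat \<Rightarrow> nat" where
  "capacity a w = window_count [1..<Suc n] a w"

definition width :: "nat \<Rightarrow> nat" where
  "width j = B ^ (p - Suc j)"

definition first_overfull :: "(nat \<Rightarrow> nat) \<Rightarrow> nat \<Rightarrow> nat \<Rightarrow> nat" where
  "first_overfull g j l = (LEAST d. d < B \<and> capacity (l + d * width j) (width j) < g (j * B + d))"

(* Pass j searches the window {offset g j<..offset g j + B ^ (p - j)}. *)
primrec offset :: "(nat \<Rightarrow> nat) \<Rightarrow> nat \<Rightarrow> nat" where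
  "offset g 0 = 0"
| "offset g (Suc j) = offset g j + first_overfull g j (offset g j) * width j"

(* Counter j * B + d counts the stream elements in piece d of pass j. It saturates at M - 1,
   so that on every input the table stays in counter_tables and thus fits into the state. *)
definition count_step :: "nat \<Rightarrow> nat \<Rightarrow> (nat \<Rightarrow> nat) \<Rightarrow> nat \<Rightarrow> nat" where
  "count_step j x g k = (let l = offset g j; d = k - j * B in
     if j * B \<le> k \<and> d < B \<and> x \<in> {l + d * width j<..l + d * width j + width j}
     then min (g k + 1) (M - 1) else g k)"

definition counter_tables :: "(nat \<Rightarrow> nat) set" where
  "counter_tables = {g. (\<forall>k. g k < M) \<and> (\<forall>k\<ge>p * B. g k = 0)}"

definition delta :: "nat \<Rightarrow> nat \<Rightarrow> nat \<Rightarrow> nat" where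
  "delta i t x = digits_encode M (p * B) (count_step i x (digit M t))"

definition answer :: "nat \<Rightarrow> nat" where
  "answer t = Suc (offset (digit M t) p)"

lemma offset_cong: "(\<And>k. k < j * B \<Longrightarrow> g k = h k) \<Longrightarrow> offset g j = offset h j"
proof (induction j)
  case (Suc j)
  then have "offset g j = offset h j" by simp
  moreover have "g (j * B + d) = h (j * B + d)" if "d < B" for d
    using Suc.prems that by simp
  then have "first_overfull g j l = first_overfull h j l" for l
    unfolding first_overfull_def by (intro arg_cong[where f = Least] ext) auto
  ultimately show ?case by simp
qed simp

lemma M_gt_1: "1 < M"
  using two_le_n counters_fit by linarith

lemma count_step_outside: "k < j * B \<or> j * B + B \<le> k \<Longrightarrow> count_step j x g k = g k"
  by (auto simp: count_step_def Let_def)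

lemma offset_count_step: "offset (count_step j x g) j = offset g j"
  by (rule offset_cong) (simp add: count_step_outside)

lemma fold_count_step_outside:
  "k < j * B \<or> j * B + B \<le> k \<Longrightarrow> fold (count_step j) xs g k = g k"
  by (induction xs arbitrary: g) (simp_all add: count_step_outside)

lemma fold_count_step_row:
  assumes "\<forall>k. g k < M" "d < B"
  shows "fold (count_step j) xs g (j * B + d)
           = min (g (j * B + d) + window_count xs (offset g j + d * width j) (width j)) (M - 1)"
  using assms(1)
proof (induction xs arbitrary: g)
  case Nil
  then have "g (j * B + d) \<le> M - 1" by (simp add: less_imp_le_nat Suc_leI le_diff_conv2)
  then show ?case by (simp add: window_count_def)
next
  case (Cons x xs)
  let ?h = "count_step j x g" and ?l = "offset g j + d * width j"
  let ?c = "if x \<in> {?l<..?l + width j} then 1 else 0"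
  have "\<forall>k. ?h k < M"
    using Cons.prems M_gt_1 by (auto simp: count_step_def Let_def min_def)
  then have "fold (count_step j) (x # xs) g (j * B + d)
      = min (?h (j * B + d) + window_count xs ?l (width j)) (M - 1)"
    using Cons.IH by (simp add: offset_count_step)
  also have "?h (j * B + d) = min (g (j * B + d) + ?c) (M - 1)"
    using assms(2) Cons.prems[rule_format, of "j * B + d"] by (auto simp: count_step_def min_def)
  also have "min (min (g (j * B + d) + ?c) (M - 1) + window_count xs ?l (width j)) (M - 1)
      = min (g (j * B + d) + (?c + window_count xs ?l (width j))) (M - 1)"
    by (simp only: min_min_add add.assoc)
  also have "?c + window_count xs ?l (width j) = window_count (x # xs) ?l (width j)"
    by (simp add: window_count_def)
  finally show ?case .
qed

lemma count_step_in_counter_tables: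
  "j < p \<Longrightarrow> g \<in> counter_tables \<Longrightarrow> count_step j x g \<in> counter_tables"
proof -
  assume "j < p" "g \<in> counter_tables"
  then have "j * B + B \<le> p * B"
    by (metis Suc_leI add.commute mult_Suc mult_le_mono1)
  then show ?thesis
    using \<open>g \<in> counter_tables\<close> M_gt_1 by (auto simp: counter_tables_def count_step_def Let_def min_def)
qed

lemma digit_digits_encode_counter_table:
  "g \<in> counter_tables \<Longrightarrow> digit M (digits_encode M (p * B) g) = g"
  using M_gt_1 by (auto simp: counter_tables_def digit_digits_encode)

lemma zero_in_counter_tables: "(\<lambda>_. 0) \<in> counter_tables"
  using M_gt_1 by (simp add: counter_tables_def)

lemma run_passes_delta:
  assumes "i \<le> p"
  shows "run_passes delta i xs 0 = digits_encode M (p * B) (iterate_passes count_step i xs (\<lambda>_. 0))"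
proof -
  have "run_passes (\<lambda>i t x. digits_encode M (p * B) (count_step i x (digit M t))) i xs
          (digits_encode M (p * B) (\<lambda>_. 0))
        = digits_encode M (p * B) (iterate_passes count_step i xs (\<lambda>_. 0))"
    by (rule run_passes_simulation[where S = counter_tables and p = p,
          OF digit_digits_encode_counter_table count_step_in_counter_tables zero_in_counter_tables assms])
  moreover have "digits_encode M (p * B) (\<lambda>_. 0) = 0"
    by (simp add: digits_encode_def)
  ultimately show ?thesis
    by (simp add: delta_def [abs_def])
qed

lemma iterate_passes_in_counter_tables:
  "i \<le> p \<Longrightarrow> iterate_passes count_step i xs (\<lambda>_. 0) \<in> counter_tables"
  by (rule iterate_passes_closed[where S = counter_tables and p = p,
        OF count_step_in_counter_tables zero_in_counter_tables])

lemma counts_after_passes: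
  fixes xs :: "nat list"
  assumes "i \<le> p"
  defines "g \<equiv> iterate_passes count_step i xs (\<lambda>_. 0)"
  shows "(\<forall>k\<ge>i * B. g k = 0) \<and>
    (\<forall>j<i. \<forall>d<B. g (j * B + d) = min (window_count xs (offset g j + d * width j) (width j)) (M - 1))"
  using assms(1) unfolding g_def
proof (induction i)
  case (Suc i)
  let ?g = "iterate_passes count_step i xs (\<lambda>_. 0)"
    and ?h = "iterate_passes count_step (Suc i) xs (\<lambda>_. 0)"
  have "?g \<in> counter_tables"
    using Suc.prems by (simp add: iterate_passes_in_counter_tables)
  then have bounded: "\<forall>k. ?g k < M" by (simp add: counter_tables_def)
  have IH: "\<forall>k\<ge>i * B. ?g k = 0"
    "\<forall>j<i. \<forall>d<B. ?g (j * B + d) = min (window_count xs (offset ?g j + d * width j) (width j)) (M - 1)"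
    using Suc by simp_all
  have outside: "?h k = ?g k" if "k < i * B \<or> i * B + B \<le> k" for k
    using that by (simp add: fold_count_step_outside)
  have offset_eq: "offset ?h j = offset ?g j" if "j \<le> i" for j
    using that outside by (intro offset_cong) (meson less_le_trans mult_le_mono1)
  have "?h k = 0" if "Suc i * B \<le> k" for k
    using that outside IH(1) by simp
  moreover have "?h (j * B + d) = min (window_count xs (offset ?h j + d * width j) (width j)) (M - 1)"
    if "j < Suc i" "d < B" for j d
  proof (cases "j < i")
    case True
    then have "j * B + d < i * B"
      using \<open>d < B\<close> by (metis add_less_cancel_left less_le_trans mult_Suc mult_le_mono1 Suc_leI add.commute)
    then show ?thesis
      using outside IH(2) True \<open>d < B\<close> offset_eq[of j] by simp
  next
    case False
    then have "j = i" using that(1) by simp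
    then show ?thesis
      using fold_count_step_row[OF bounded \<open>d < B\<close>] IH(1) offset_eq[of i] by simp
  qed
  ultimately show ?case by blast
qed simp

lemma power_eq_mult_width: "j < p \<Longrightarrow> B ^ (p - j) = B * width j"
  by (simp add: width_def Suc_diff_Suc flip: power_Suc)

lemma overfull_window:
  assumes rows: "\<And>j d. j < p \<Longrightarrow> d < B \<Longrightarrow>
      g (j * B + d) = window_count xs (offset g j + d * width j) (width j)"
    and start: "capacity 0 (B ^ p) < window_count xs 0 (B ^ p)"
    and "j \<le> p"
  shows "capacity (offset g j) (B ^ (p - j)) < window_count xs (offset g j) (B ^ (p - j))"
  using \<open>j \<le> p\<close>
proof (induction j)
  case 0
  then show ?case using start by simp
next
  case (Suc j)
  then have "j < p" by simp
  let ?l = "offset g j" and ?w = "width j"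
  let ?overfull = "\<lambda>d. d < B \<and> capacity (?l + d * ?w) ?w < g (j * B + d)"
  have "capacity ?l (B * ?w) < window_count xs ?l (B * ?w)"
    using Suc \<open>j < p\<close> by (simp add: power_eq_mult_width)
  then obtain d where "d < B" "capacity (?l + d * ?w) ?w < window_count xs (?l + d * ?w) ?w"
    unfolding capacity_def by (rule window_pigeonhole)
  then have "?overfull d" using rows[OF \<open>j < p\<close>] by simp
  then have "?overfull (first_overfull g j ?l)"
    unfolding first_overfull_def by (rule LeastI)
  then show ?case
    using rows[OF \<open>j < p\<close>, of "first_overfull g j ?l"] by (auto simp: width_def)
qed

lemma finds_duplicate:
  assumes len: "length xs = 3 * n div 2" and range: "set xs \<subseteq> {1..n}"
  shows "2 \<le> count_list xs (answer (run_passes delta p xs 0))"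
proof -
  define g where "g = iterate_passes count_step p xs (\<lambda>_. 0)"
  have answer: "answer (run_passes delta p xs 0) = Suc (offset g p)"
    using iterate_passes_in_counter_tables[of p xs]
    by (simp add: answer_def g_def run_passes_delta digit_digits_encode_counter_table)
  have "window_count xs a w \<le> M - 1" for a w
    using window_count_le_length[of xs a w] len two_le_n counters_fit by linarith
  then have rows: "g (j * B + d) = window_count xs (offset g j + d * width j) (width j)"
    if "j < p" "d < B" for j d
    using counts_after_passes[of p xs] that by (simp add: g_def min_absorb1)
  have "capacity 0 (B ^ p) = n"
    using n_le_power by (simp add: capacity_def window_count_def)
  moreover have "\<forall>x\<in>set xs. x \<in> {0<..0 + B ^ p}"
    using range n_le_power by auto
  then have "window_count xs 0 (B ^ p) = length xs"
    by (simp add: window_count_def)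
  ultimately have "capacity 0 (B ^ p) < window_count xs 0 (B ^ p)"
    using len two_le_n by simp
  from overfull_window[OF rows this order.refl]
  have "capacity (offset g p) 1 < window_count xs (offset g p) 1" by simp
  then have less: "count_list [1..<Suc n] (Suc (offset g p)) < count_list xs (Suc (offset g p))"
    by (simp only: capacity_def window_count_one)
  then have "Suc (offset g p) \<in> set xs"
    by (metis count_notin not_less_zero)
  then have "count_list [1..<Suc n] (Suc (offset g p)) = 1"
    using range by (auto simp: count_list_upt)
  then show ?thesis
    using less by (simp add: answer)
qed

lemma delta_streaming_alg: "streaming_alg p (b * (p * B)) 0 delta"
  using digits_encode_less[of M "p * B"] by (simp add: streaming_alg_def delta_def power_mult)

lemma find_duplicate_algorithm:
  "\<exists>init \<delta> out.
     streaming_alg p (b * (p * B)) init \<delta> \<and> solves_find_duplicate n p init \<delta> out"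
  using delta_streaming_alg finds_duplicate unfolding solves_find_duplicate_def by blast

end

definition branching :: "nat \<Rightarrow> nat \<Rightarrow> nat" where
  "branching p n = nat \<lceil>real n powr (1 / real p)\<rceil>"

definition counter_bits :: "nat \<Rightarrow> nat" where
  "counter_bits n = nat \<lceil>log 2 (real n)\<rceil> + 1"

lemma le_branching_power:
  assumes "0 < p"
  shows "n \<le> branching p n ^ p"
proof (cases "n = 0")
  case False
  then have "real n = (real n powr (1 / real p)) ^ p"
    using assms by (simp add: powr_power)
  also have "\<dots> \<le> real (branching p n) ^ p"
    unfolding branching_def by (intro power_mono) (simp_all add: real_nat_ceiling_ge)
  finally show ?thesis by (metis of_nat_le_iff of_nat_power)
qed simp

lemma branching_le:
  assumes "0 < p" "0 < n"
  shows "real (branching p n) \<le> 2 * real n powr (1 / real p)"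
proof -
  have "1 \<le> real n powr (1 / real p)"
    using assms by (intro ge_one_powr_ge_zero) auto
  then show ?thesis
    unfolding branching_def by linarith
qed

lemma double_le_two_power_counter_bits:
  assumes "0 < n"
  shows "2 * n \<le> 2 ^ counter_bits n"
proof -
  have "real n = 2 powr log 2 (real n)"
    using assms by simp
  also have "\<dots> \<le> 2 powr real (nat \<lceil>log 2 (real n)\<rceil>)"
    by (intro powr_mono) linarith+
  finally have "n \<le> 2 ^ nat \<lceil>log 2 (real n)\<rceil>"
    by (simp add: powr_realpow flip: of_nat_power)
  then show ?thesis
    by (simp add: counter_bits_def)
qed

lemma counter_bits_le:
  assumes "3 \<le> n"
  shows "real (counter_bits n) \<le> (1 / ln 2 + 2) * ln (real n)"
proof -
  have ln_ge_1: "1 \<le> ln (real n)"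
    using exp_le assms by (subst ln_ge_iff) auto
  have "0 \<le> log 2 (real n)"
    using assms by simp
  then have "real (counter_bits n) \<le> log 2 (real n) + 2"
    unfolding counter_bits_def using of_int_ceiling_le_add_one[of "log 2 (real n)"] by linarith
  also have "\<dots> \<le> (1 / ln 2 + 2) * ln (real n)"
    using ln_ge_1 by (simp add: log_def distrib_right)
  finally show ?thesis .
qed

lemma memory_bound:
  assumes "0 < p" "3 \<le> n"
  shows "real (counter_bits n * (p * branching p n))
           \<le> 2 * real p * (1 / ln 2 + 2) * real n powr (1 / real p) * ln (real n)"
proof -
  have "real (counter_bits n * (p * branching p n))
      \<le> ((1 / ln 2 + 2) * ln (real n)) * (real p * (2 * real n powr (1 / real p)))"
    using counter_bits_le[OF assms(2)] branching_le[OF assms(1), of n] assms(2)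
    by (simp only: of_nat_mult) (intro mult_mono mult_left_mono; simp)
  then show ?thesis
    by (simp only: ac_simps)
qed

theorem mainTheorem2:
  fixes p :: nat
  assumes "p \<ge> 1"
  shows "\<exists>C k n0. \<forall>n \<ge> n0. \<exists>s init \<delta> out.
           real s \<le> C * real n powr (1 / real p) * ln (real n) ^ k
         \<and> streaming_alg p s init \<delta>
         \<and> solves_find_duplicate n p init \<delta> out"
proof -
  have "\<exists>s init \<delta> out.
           real s \<le> 2 * real p * (1 / ln 2 + 2) * real n powr (1 / real p) * ln (real n) ^ 1
         \<and> streaming_alg p s init \<delta> \<and> solves_find_duplicate n p init \<delta> out"
    if "3 \<le> n" for n
  proof -
    interpret find_duplicate_search n p "branching p n" "counter_bits n"
      using assms that
      by unfold_locales (simp_all add: le_branching_power double_le_two_power_counter_bits)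
    have "0 < p" using assms by simp
    then show ?thesis
      using find_duplicate_algorithm memory_bound[OF _ that] by (metis power_one_right)
  qed
  then show ?thesis by blast
qed

end
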